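(* Let $d\ge2$ and let $f:\{0,1\}^r\to\{0,1\}$ satisfy $f(0,\dots,0)=1$. If $f$ contains $\mathrm{NAND}_d$ as a restriction and does not contain $\mathrm{IMPL}$ as a $0$-restriction, then $f$ contains $\mathrm{NAND}_d$ as a $0$-restriction.
   Context: $g:\{0,1\}^s\to\{0,1\}$ is a restriction of $f$ if there are pairwise disjoint, possibly empty, sets $X_1,\dots,X_s,Z_0,Z_1$ with union $[r]$ such that $g(x_1,\dots,x_s)=f(u)$. Here $u_i=x_j$ for $i\in X_j$, $u_i=0$ for $i\in Z_0$, and $u_i=1$ for $i\in Z_1$. It is a $0$-restriction if this holds with $Z_1=\emptyset$. $\mathrm{IMPL}(y_1,y_2)=\overline{y_1}\vee y_2$, and $\mathrm{NAND}_d(y_1,\dots,y_d)=\overline{y_1\wedge\cdots\wedge y_d}$. *)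

theory Defs
  imports Main
begin

text \<open>A Boolean function of arity r is modelled as f :: bool list \<Rightarrow> bool,
  evaluated on lists of length r (True = 1, False = 0).
  A restriction pattern is a map sigma from positions i < r to either
  Inl j (i belongs to X_j, j < s) or Inr b (i belongs to Z_b).\<close>

definition subst_input :: "nat \<Rightarrow> (nat \<Rightarrow> nat + bool) \<Rightarrow> bool list \<Rightarrow> bool list" where
  "subst_input r sigma x = map (\<lambda>i. case sigma i of Inl j \<Rightarrow> x ! j | Inr b \<Rightarrow> b) [0..<r]"

definition is_restriction ::
  "nat \<Rightarrow> (bool list \<Rightarrow> bool) \<Rightarrow> nat \<Rightarrow> (bool list \<Rightarrow> bool) \<Rightarrow> bool" where
  "is_restriction s g r f \<longleftrightarrow>
     (\<exists>sigma :: nat \<Rightarrow> nat + bool.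
        (\<forall>i<r. \<forall>j. sigma i = Inl j \<longrightarrow> j < s) \<and>
        (\<forall>x. length x = s \<longrightarrow> g x = f (subst_input r sigma x)))"

definition is_0_restriction ::
  "nat \<Rightarrow> (bool list \<Rightarrow> bool) \<Rightarrow> nat \<Rightarrow> (bool list \<Rightarrow> bool) \<Rightarrow> bool" where
  "is_0_restriction s g r f \<longleftrightarrow>
     (\<exists>sigma :: nat \<Rightarrow> nat + bool.
        (\<forall>i<r. \<forall>j. sigma i = Inl j \<longrightarrow> j < s) \<and>
        (\<forall>i<r. sigma i \<noteq> Inr True) \<and>
        (\<forall>x. length x = s \<longrightarrow> g x = f (subst_input r sigma x)))"

definition IMPL :: "bool list \<Rightarrow> bool" where
  "IMPL y = (\<not> y ! 0 \<or> y ! 1)"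

definition NAND :: "nat \<Rightarrow> bool list \<Rightarrow> bool" where
  "NAND d y = (\<not> (\<forall>i<d. y ! i))"

end

theory Submission
  imports Defs
begin

text \<open>Let \<sigma> realise NAND_d as a restriction of f. Replacing every constant 1 of \<sigma> by the
  variable x_0 gives a 0-restriction that agrees with \<sigma> when x_0 = 1. When x_0 = 0 the
  value of NAND_d is 1, so it suffices that f stays 1 after the constants 1 are set to 0.
  Otherwise the input u (the variables set to 1 by x) and the input v (the constants 1)
  have disjoint supports with f(0) = f(v) = f(u \<or> v) = 1 but f(u) = 0, and the 0-restriction
  (a, b) \<mapsto> f(a u \<or> b v) is IMPL(a, b).\<close>

lemma length_subst_input [simp]: "length (subst_input r \<sigma> x) = r"
  by (simp add: subst_input_def)

lemma nth_subst_input [simp]: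
  "i < r \<Longrightarrow> subst_input r \<sigma> x ! i = (case \<sigma> i of Inl j \<Rightarrow> x ! j | Inr b \<Rightarrow> b)"
  by (simp add: subst_input_def)

lemma is_0_restriction_IMPL_if_disjoint:
  assumes "length u = r" "length v = r" "\<forall>i<r. \<not> (u ! i \<and> v ! i)"
    and "f (replicate r False)" "f v" "f (map2 (\<or>) u v)" "\<not> f u"
  shows "is_0_restriction 2 IMPL r f"
  unfolding is_0_restriction_def
proof (intro exI conjI allI impI)
  define \<tau> :: "nat \<Rightarrow> nat + bool"
    where "\<tau> i = (if u ! i then Inl 0 else if v ! i then Inl 1 else Inr False)" for i
  show "j < 2" if "\<tau> i = Inl j" for i j
    using that by (auto simp: \<tau>_def split: if_splits)
  show "\<tau> i \<noteq> Inr True" for i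
    by (simp add: \<tau>_def)
  have subst_\<tau>: "subst_input r \<tau> [a, b] =
      (if a then if b then map2 (\<or>) u v else u else if b then v else replicate r False)" for a b
    using assms(1-3) by (intro nth_equalityI) (auto simp: \<tau>_def)
  fix y :: "bool list"
  assume "length y = 2"
  then obtain a b where "y = [a, b]"
    by (metis One_nat_def Suc_1 length_0_conv length_Suc_conv)
  then show "IMPL y = f (subst_input r \<tau> y)"
    using assms(4-7) by (simp add: subst_\<tau> IMPL_def)
qed

definition replace_ones :: "nat + bool \<Rightarrow> (nat \<Rightarrow> nat + bool) \<Rightarrow> nat \<Rightarrow> nat + bool" where
  "replace_ones c \<sigma> i = (if \<sigma> i = Inr True then c else \<sigma> i)"

lemma replace_ones_var_bound:
  "\<forall>i<r. \<forall>j. \<sigma> i = Inl j \<longrightarrow> j < s \<Longrightarrow> k < s \<Longrightarrow>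
    \<forall>i<r. \<forall>j. replace_ones (Inl k) \<sigma> i = Inl j \<longrightarrow> j < s"
  by (simp add: replace_ones_def)

lemma replace_ones_var_ne_one: "replace_ones (Inl k) \<sigma> i \<noteq> Inr True"
  by (simp add: replace_ones_def)

lemma subst_input_replace_ones_true:
  "x ! k \<Longrightarrow> subst_input r (replace_ones (Inl k) \<sigma>) x = subst_input r \<sigma> x"
  by (intro nth_equalityI) (auto simp: replace_ones_def)

lemma subst_input_replace_ones_false:
  "\<not> x ! k \<Longrightarrow>
    subst_input r (replace_ones (Inl k) \<sigma>) x = subst_input r (replace_ones (Inr False) \<sigma>) x"
  by (intro nth_equalityI) (auto simp: replace_ones_def)

lemma subst_input_split_ones:
  assumes "\<forall>i<r. \<forall>j. \<sigma> i = Inl j \<longrightarrow> j < length x"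
  shows "subst_input r \<sigma> x =
    map2 (\<or>) (subst_input r (replace_ones (Inr False) \<sigma>) x)
             (subst_input r \<sigma> (replicate (length x) False))"
  using assms by (intro nth_equalityI) (auto simp: replace_ones_def split: sum.split)

lemma disjoint_replace_ones_false_ones:
  assumes "\<forall>i<r. \<forall>j. \<sigma> i = Inl j \<longrightarrow> j < s"
  shows "\<forall>i<r. \<not> (subst_input r (replace_ones (Inr False) \<sigma>) x ! i \<and>
                   subst_input r \<sigma> (replicate s False) ! i)"
  using assms by (auto simp: replace_ones_def split: sum.split)

lemma replace_ones_false_preserves_true:
  assumes bound: "\<forall>i<r. \<forall>j. \<sigma> i = Inl j \<longrightarrow> j < length x"
    and "f (replicate r False)" "\<not> is_0_restriction 2 IMPL r f"
    and "f (subst_input r \<sigma> x)" "f (subst_input r \<sigma> (replicate (length x) False))"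
  shows "f (subst_input r (replace_ones (Inr False) \<sigma>) x)"
proof (rule ccontr)
  let ?u = "subst_input r (replace_ones (Inr False) \<sigma>) x"
    and ?v = "subst_input r \<sigma> (replicate (length x) False)"
  assume "\<not> f ?u"
  moreover have "f (map2 (\<or>) ?u ?v)"
    using assms(4) subst_input_split_ones[OF bound] by simp
  ultimately have "is_0_restriction 2 IMPL r f"
    using disjoint_replace_ones_false_ones[OF bound] assms(2,5)
    by (intro is_0_restriction_IMPL_if_disjoint) simp_all
  with assms(3) show False ..
qed

theorem mainTheorem16:
  fixes f :: "bool list \<Rightarrow> bool" and r d :: nat
  assumes "d \<ge> 2"
    and "f (replicate r False)"
    and "is_restriction d (NAND d) r f"
    and "\<not> is_0_restriction 2 IMPL r f"
  shows "is_0_restriction d (NAND d) r f"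
proof -
  obtain \<sigma> where bound: "\<forall>i<r. \<forall>j. \<sigma> i = Inl j \<longrightarrow> j < d"
    and realises: "\<forall>x. length x = d \<longrightarrow> NAND d x = f (subst_input r \<sigma> x)"
    using assms(3) unfolding is_restriction_def by blast
  have NAND_if_first_false: "NAND d x" if "\<not> x ! 0" for x
    using assms(1) that by (auto simp: NAND_def intro!: exI[where x = 0])
  have realises_0: "NAND d x = f (subst_input r (replace_ones (Inl 0) \<sigma>) x)"
    if "length x = d" for x
  proof (cases "x ! 0")
    case True
    then show ?thesis
      using realises that by (simp add: subst_input_replace_ones_true)
  next
    case False
    have "NAND d (replicate d False)"
      using NAND_if_first_false assms(1) by simp
    then have "f (subst_input r (replace_ones (Inr False) \<sigma>) x)"
      using replace_ones_false_preserves_true[of r \<sigma> x f] bound assms(2,4) realises that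
        NAND_if_first_false[OF False] by simp
    then show ?thesis
      using NAND_if_first_false[OF False] by (simp add: subst_input_replace_ones_false[OF False])
  qed
  show ?thesis
    unfolding is_0_restriction_def
  proof (intro exI conjI)
    show "\<forall>i<r. \<forall>j. replace_ones (Inl 0) \<sigma> i = Inl j \<longrightarrow> j < d"
      using assms(1) by (intro replace_ones_var_bound[OF bound]) simp
    show "\<forall>i<r. replace_ones (Inl 0) \<sigma> i \<noteq> Inr True"
      by (simp add: replace_ones_var_ne_one)
  qed (use realises_0 in blast)
qed

end
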